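(* Let $(A,\boxplus,0)$ be an L-mosaic. Then the relation defined by $y\le x$ if and only if $y\in x\boxplus x$ is a partial order on $A$, and $0$ is a bottom element for it.
   Context: For a multioperation $\boxplus:A\times A\to\wp(A)$ and subsets $X,Y$, $X\boxplus Y:=\bigcup_{x\in X,y\in Y}x\boxplus y$. A commutative mosaic $(A,\boxplus,e)$: $x\boxplus y=y\boxplus x$, $e\boxplus x=\{x\}$ for all $x$, and for some endofunction $\rho$, $z\in x\boxplus y$ implies $x\in z\boxplus\rho(y)$ and $y\in\rho(x)\boxplus z$. An L-mosaic is a commutative mosaic $(A,\boxplus,0)$ such that: (Lms1) $0,x\in x\boxplus x$; (Lms2) $(x\boxplus x)\boxplus(x\boxplus x)=x\boxplus x$; (Lms3) $(x\boxplus(x\boxplus y))\cap((x\boxplus y)\boxplus y)\subseteq x\boxplus y$; (Lms4) for all $x,y$ there is a unique $z\in x\boxplus y$ with $x,y\in z\boxplus z$. *)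

theory Defs
  imports Main
begin

definition set_mop :: "('a \<Rightarrow> 'a \<Rightarrow> 'a set) \<Rightarrow> 'a set \<Rightarrow> 'a set \<Rightarrow> 'a set" where
  "set_mop m X Y = (\<Union>x\<in>X. \<Union>y\<in>Y. m x y)"

text \<open>Commutative mosaic (A, m, e), with carrier A the whole type.\<close>
definition comm_mosaic :: "('a \<Rightarrow> 'a \<Rightarrow> 'a set) \<Rightarrow> 'a \<Rightarrow> bool" where
  "comm_mosaic m e \<longleftrightarrow>
     (\<forall>x y. m x y = m y x) \<and>
     (\<forall>x. m e x = {x}) \<and>
     (\<exists>\<rho>::'a \<Rightarrow> 'a. \<forall>x y z. z \<in> m x y \<longrightarrow> x \<in> m z (\<rho> y) \<and> y \<in> m (\<rho> x) z)"

definition L_mosaic :: "('a \<Rightarrow> 'a \<Rightarrow> 'a set) \<Rightarrow> 'a \<Rightarrow> bool" where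
  "L_mosaic m z0 \<longleftrightarrow>
     comm_mosaic m z0 \<and>
     (\<forall>x. z0 \<in> m x x \<and> x \<in> m x x) \<and>
     (\<forall>x. set_mop m (m x x) (m x x) = m x x) \<and>
     (\<forall>x y. set_mop m {x} (m x y) \<inter> set_mop m (m x y) {y} \<subseteq> m x y) \<and>
     (\<forall>x y. \<exists>!z. z \<in> m x y \<and> x \<in> m z z \<and> y \<in> m z z)"

definition mosaic_le :: "('a \<Rightarrow> 'a \<Rightarrow> 'a set) \<Rightarrow> 'a rel" where
  "mosaic_le m = {(y, x). y \<in> m x x}"

end

theory Submission
  imports Defs
begin

text \<open>Reflexivity of the order and minimality of 0 are axiom Lms1, and transitivity is the
  idempotence Lms2 of x \<boxplus> x. Antisymmetry comes from the uniqueness in Lms4 for y = x: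
  if y \<le> x and x \<le> y, then both x and y are elements z of x \<boxplus> x with x \<in> z \<boxplus> z.\<close>

lemma L_mosaicD:
  assumes "L_mosaic m z0"
  shows L_mosaic_zero_le: "z0 \<in> m x x"
    and L_mosaic_self_le: "x \<in> m x x"
    and L_mosaic_square_idem: "set_mop m (m x x) (m x x) = m x x"
    and L_mosaic_unique_square_root: "\<exists>!z. z \<in> m x x \<and> x \<in> m z z"
  using assms unfolding L_mosaic_def by blast+

lemma refl_on_mosaic_le:
  assumes "\<And>x. x \<in> m x x"
  shows "refl_on UNIV (mosaic_le m)"
  using assms unfolding refl_on_def mosaic_le_def by simp

lemma trans_mosaic_le:
  assumes "\<And>x. set_mop m (m x x) (m x x) \<subseteq> m x x"
  shows "trans (mosaic_le m)"
proof (rule transI)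
  fix a b c
  assume "(a, b) \<in> mosaic_le m" and "(b, c) \<in> mosaic_le m"
  then have "a \<in> m b b" and "b \<in> m c c"
    by (simp_all add: mosaic_le_def)
  then have "a \<in> set_mop m (m c c) (m c c)"
    unfolding set_mop_def by blast
  with assms show "(a, c) \<in> mosaic_le m"
    by (auto simp: mosaic_le_def)
qed

lemma antisym_mosaic_le:
  assumes self_le: "\<And>x. x \<in> m x x"
    and unique_root: "\<And>x. \<exists>!z. z \<in> m x x \<and> x \<in> m z z"
  shows "antisym (mosaic_le m)"
proof (rule antisymI)
  fix x y
  assume "(x, y) \<in> mosaic_le m" and "(y, x) \<in> mosaic_le m"
  then have "x \<in> m y y" and "y \<in> m x x"
    by (simp_all add: mosaic_le_def)
  with self_le[of x] unique_root[of x] show "x = y"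
    by blast
qed

theorem mainTheorem10:
  fixes m :: "'a \<Rightarrow> 'a \<Rightarrow> 'a set" and z0 :: 'a
  assumes "L_mosaic m z0"
  shows "partial_order_on UNIV (mosaic_le m) \<and> (\<forall>x. (z0, x) \<in> mosaic_le m)"
proof -
  have "refl_on UNIV (mosaic_le m)"
    by (rule refl_on_mosaic_le) (rule L_mosaic_self_le[OF assms])
  moreover have "trans (mosaic_le m)"
    by (rule trans_mosaic_le) (simp add: L_mosaic_square_idem[OF assms])
  moreover have "antisym (mosaic_le m)"
    by (rule antisym_mosaic_le)
      (rule L_mosaic_self_le[OF assms], rule L_mosaic_unique_square_root[OF assms])
  moreover have "\<forall>x. (z0, x) \<in> mosaic_le m"
    using L_mosaic_zero_le[OF assms] by (simp add: mosaic_le_def)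
  ultimately show ?thesis
    unfolding partial_order_on_def preorder_on_def by simp
qed

end
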